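(* Let $q\ge 3$ be a prime power, $e\ge 3$, $a\in\mathbb{F}_{q^e}$ with $a\neq 0$, $\ell=q^{e-1}+\cdots+q+1$, and let $r=h(\ell-q^{e-1}-1)+1$ for some integer $1\le h\le q-1$. Let $N=2q^{e-1}-q^{e-2}-1$, for $i\in\mathbb{Z}$ let $A_i=i\ell-\frac{rN}{q-1}$, let $S_N=\{A_i: i\in\mathbb{Z},\ 0\le A_i\le N\}$, and let $j=2hq^{e-3}+h\sum_{i=0}^{e-4}q^i$. Then (i) $A_j=(h-2)q^{e-2}+(2h-1)q^{e-3}+(h-1)\sum_{i=0}^{e-4}q^i$; (ii) $A_{j+1}=q^{e-1}+(h-1)q^{e-2}+2hq^{e-3}+h\sum_{i=0}^{e-4}q^i$; (iii) $S_N=\{A_{j+1}\}$ if $h=1$, $S_N=\{A_j,A_{j+1}\}$ if $2\le h\le q-2$, and $S_N=\{A_j\}$ if $h=q-1$.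
   Context: Empty sums (e.g. $\sum_{i=0}^{e-4}$ when $e=3$) equal $0$. *)

theory Defs
  imports Complex_Main "HOL-Computational_Algebra.Primes"
begin

definition prime_power :: "nat \<Rightarrow> bool" where
  "prime_power q \<longleftrightarrow> (\<exists>p k. prime p \<and> k \<ge> 1 \<and> q = p ^ k)"

definition A :: "int \<Rightarrow> int \<Rightarrow> int \<Rightarrow> int \<Rightarrow> int \<Rightarrow> rat" where
  "A q ell r N i = of_int (i * ell) - of_int (r * N) / of_int (q - 1)"

end

(* Put P = q^(e-3) and s = sum of q^i over i < e - 3, so that P = (q - 1) s + 1,
   ell = s + P + q P + q^2 P and N = (q - 1) M with M = 2 q P + P + s.  Then
   A_i = i ell - r M is an integer progression of step ell, and A_j = h B - M with
   B = q P + 2 P + s.  Since A_j < ell and N < A_j + 2 ell, only A_j and A_(j+1) can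
   lie in [0, N].  Finally A_j >= 0 iff h B >= M, where B < M <= 2 B, and
   A_(j+1) <= N iff h B <= q^2 P - 1, where (q - 2) B <= q^2 P - 1 < (q - 1) B; this
   cuts h at 2 and at q - 2. *)

theory Submission
  imports Defs
begin

lemma progression_in_interval_iff:
  fixes a ell N k :: int
  assumes "0 < ell" and "a < ell" and "N < a + 2 * ell"
  shows "(0 \<le> a + k * ell \<and> a + k * ell \<le> N) \<longleftrightarrow>
         (k = 0 \<and> 0 \<le> a \<and> a \<le> N) \<or> (k = 1 \<and> 0 \<le> a + ell \<and> a + ell \<le> N)"
proof -
  consider "k \<le> -1" | "k = 0" | "k = 1" | "2 \<le> k" by linarith
  then show ?thesis
  proof cases
    case 1
    then have "k * ell \<le> -1 * ell" using assms(1) by (intro mult_right_mono) auto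
    then show ?thesis using 1 assms(2) by auto
  next
    case 4
    then have "2 * ell \<le> k * ell" using assms(1) by (intro mult_right_mono) auto
    then show ?thesis using 4 assms(3) by auto
  qed auto
qed

lemma mult_le_iff_le_of_bracket:
  fixes B T h k :: int
  assumes "0 < B" and "k * B \<le> T" and "T < (k + 1) * B"
  shows "h * B \<le> T \<longleftrightarrow> h \<le> k"
proof
  assume "h * B \<le> T"
  then have "h * B < (k + 1) * B" using assms(3) by linarith
  then show "h \<le> k" using assms(1) by (simp add: mult_less_cancel_right)
next
  assume "h \<le> k"
  then have "h * B \<le> k * B" using assms(1) by (simp add: mult_right_mono)
  then show "h * B \<le> T" using assms(2) by linarith
qed

lemma offset_progression_window_iff:
  fixes Q P s h ell M B k :: int
  assumes P: "P = (Q - 1) * s + 1" and Q: "3 \<le> Q" and s: "0 \<le> s"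
    and h: "1 \<le> h" "h \<le> Q - 1"
    and ell: "ell = s + P + Q * P + Q^2 * P"
    and M: "M = 2 * Q * P + P + s"
    and B: "B = Q * P + 2 * P + s"
  shows "(0 \<le> (h * B - M) + k * ell \<and> (h * B - M) + k * ell \<le> (Q - 1) * M) \<longleftrightarrow>
         (k = 0 \<and> 2 \<le> h) \<or> (k = 1 \<and> h \<le> Q - 2)"
proof -
  have P_pos: "1 \<le> P" using P Q s by simp
  have QP: "3 * P \<le> Q * P" and QQP: "0 \<le> Q^2 * P" using Q P_pos by simp_all
  have B_pos: "0 < B" using B QP P_pos s by linarith
  have Q1_B: "(Q - 1) * B = Q^2 * P + Q * P - P - 1"
    unfolding B P by (simp add: algebra_simps power2_eq_square)
  have Q2_B: "(Q - 2) * B = Q^2 * P - 3 * P - s - 1"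
    unfolding B P by (simp add: algebra_simps power2_eq_square)
  have QM_minus_ell: "Q * M - ell = Q^2 * P - 1"
    unfolding M ell P by (simp add: algebra_simps power2_eq_square)
  have hB: "B \<le> h * B" "h * B \<le> (Q - 1) * B"
    using h B_pos by (simp_all add: mult_right_mono)
  have "h * B \<le> M - 1 \<longleftrightarrow> h \<le> 1"
  proof (rule mult_le_iff_le_of_bracket)
    show "1 * B \<le> M - 1" "M - 1 < (1 + 1) * B"
      using QP P_pos s by (simp_all add: B M mult.assoc)
  qed (fact B_pos)
  then have lower: "0 \<le> h * B - M \<longleftrightarrow> 2 \<le> h" by linarith
  have "h * B - M + ell \<le> (Q - 1) * M \<longleftrightarrow> h * B \<le> Q * M - ell"
    by (simp add: algebra_simps)
  also have "\<dots> \<longleftrightarrow> h \<le> Q - 2"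
    unfolding QM_minus_ell
    by (rule mult_le_iff_le_of_bracket) (use B_pos Q1_B Q2_B QP P_pos s in simp_all)
  finally have upper: "h * B - M + ell \<le> (Q - 1) * M \<longleftrightarrow> h \<le> Q - 2" .
  have "(Q - 1) * M = Q * M - M" by (simp add: algebra_simps)
  then have "0 < ell" "h * B - M < ell" "(Q - 1) * M < h * B - M + 2 * ell"
      "h * B - M \<le> (Q - 1) * M" "0 \<le> h * B - M + ell"
    using ell M B hB Q1_B QM_minus_ell B_pos QP QQP P_pos s unfolding mult.assoc by linarith+
  then show ?thesis
    using progression_in_interval_iff[of ell "h * B - M" "(Q - 1) * M" k] lower upper by auto
qed

lemma offset_at_j_eq:
  fixes Q P s h :: int
  assumes "P = (Q - 1) * s + 1"
  shows "(2 * h * P + h * s) * (s + P + Q * P + Q^2 * P)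
           - (h * (Q * P + P + s - 1) + 1) * (2 * Q * P + P + s)
         = h * (Q * P + 2 * P + s) - (2 * Q * P + P + s)"
  unfolding assms by (simp add: algebra_simps power2_eq_square)

lemma A_eq_of_int:
  assumes "N = (q - 1) * M" and "q \<noteq> 1"
  shows "A q ell r N i = of_int (i * ell - r * M)"
proof -
  have "(of_int (q - 1) :: rat) \<noteq> 0" using assms(2) by simp
  then show ?thesis unfolding A_def assms(1) by (simp add: ac_simps)
qed

lemma A_window_normalized:
  fixes Q P s h ell r N j :: int
  assumes P: "P = (Q - 1) * s + 1" and Q: "3 \<le> Q" and s: "0 \<le> s"
    and h: "1 \<le> h" "h \<le> Q - 1"
    and ell: "ell = s + P + Q * P + Q^2 * P"
    and r: "r = h * (Q * P + P + s - 1) + 1"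
    and N: "N = 2 * (Q^2 * P) - Q * P - 1"
    and j: "j = 2 * h * P + h * s"
  shows "A Q ell r N j = of_int ((h - 2) * Q * P + (2 * h - 1) * P + (h - 1) * s)"
    and "A Q ell r N (j + 1) = of_int (Q^2 * P + (h - 1) * Q * P + 2 * h * P + h * s)"
    and "(0 \<le> A Q ell r N i \<and> A Q ell r N i \<le> of_int N) \<longleftrightarrow>
         (i = j \<and> 2 \<le> h) \<or> (i = j + 1 \<and> h \<le> Q - 2)"
proof -
  define M B where "M = 2 * Q * P + P + s" and "B = Q * P + 2 * P + s"
  have N_eq: "N = (Q - 1) * M"
  proof -
    have "(Q - 1) * M = 2 * (Q^2 * P) - Q * P - P + (Q - 1) * s"
      by (simp add: M_def algebra_simps power2_eq_square)
    then show ?thesis using N P by linarith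
  qed
  have A_eq: "A Q ell r N i = of_int ((h * B - M) + (i - j) * ell)" for i
  proof -
    have "Q \<noteq> 1" using Q by simp
    have "i * ell - r * M = (j * ell - r * M) + (i - j) * ell" by (simp add: algebra_simps)
    also have "j * ell - r * M = h * B - M"
      unfolding j ell r M_def B_def by (rule offset_at_j_eq[OF P])
    finally show ?thesis by (simp only: A_eq_of_int[OF N_eq \<open>Q \<noteq> 1\<close>])
  qed
  show "A Q ell r N j = of_int ((h - 2) * Q * P + (2 * h - 1) * P + (h - 1) * s)"
    unfolding A_eq by (simp add: B_def M_def algebra_simps)
  show "A Q ell r N (j + 1) = of_int (Q^2 * P + (h - 1) * Q * P + 2 * h * P + h * s)"
    unfolding A_eq by (simp add: B_def M_def ell algebra_simps)
  have "(0 \<le> A Q ell r N i \<and> A Q ell r N i \<le> of_int N) \<longleftrightarrow>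
      (0 \<le> h * B - M + (i - j) * ell \<and> h * B - M + (i - j) * ell \<le> (Q - 1) * M)"
    unfolding A_eq by (simp only: N_eq of_int_0_le_iff of_int_le_iff)
  also have "\<dots> \<longleftrightarrow> (i - j = 0 \<and> 2 \<le> h) \<or> (i - j = 1 \<and> h \<le> Q - 2)"
    by (rule offset_progression_window_iff[OF P Q s h ell M_def B_def])
  finally show "(0 \<le> A Q ell r N i \<and> A Q ell r N i \<le> of_int N) \<longleftrightarrow>
      (i = j \<and> 2 \<le> h) \<or> (i = j + 1 \<and> h \<le> Q - 2)"
    by auto
qed

theorem lemma4p4:
  fixes q e h :: nat and ell r N j :: int and a :: "'f::{field,finite}"
  assumes "prime_power q" and "q \<ge> 3" and "e \<ge> 3"
    and "card (UNIV :: 'f set) = q ^ e" and "a \<noteq> 0"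
    and "ell = (\<Sum>i\<le>e-1. int q ^ i)"
    and "1 \<le> h" and "h \<le> q - 1"
    and "r = int h * (ell - int q ^ (e-1) - 1) + 1"
    and "N = 2 * int q ^ (e-1) - int q ^ (e-2) - 1"
    and "j = 2 * int h * int q ^ (e-3) + int h * (\<Sum>i<e-3. int q ^ i)"
  shows "A q ell r N j = of_int ((int h - 2) * int q ^ (e-2) + (2 * int h - 1) * int q ^ (e-3)
                + (int h - 1) * (\<Sum>i<e-3. int q ^ i))
    \<and> A q ell r N (j+1) = of_int (int q ^ (e-1) + (int h - 1) * int q ^ (e-2)
                + 2 * int h * int q ^ (e-3) + int h * (\<Sum>i<e-3. int q ^ i))
    \<and> (h = 1 \<longrightarrow> {A q ell r N i | i. 0 \<le> A q ell r N i \<and> A q ell r N i \<le> of_int N} = {A q ell r N (j+1)})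
       \<and> (2 \<le> h \<and> h \<le> q - 2 \<longrightarrow> {A q ell r N i | i. 0 \<le> A q ell r N i \<and> A q ell r N i \<le> of_int N} = {A q ell r N j, A q ell r N (j+1)})
       \<and> (h = q - 1 \<longrightarrow> {A q ell r N i | i. 0 \<le> A q ell r N i \<and> A q ell r N i \<le> of_int N} = {A q ell r N j})"
proof -
  obtain m where e: "e = m + 3" using \<open>e \<ge> 3\<close> by (metis le_add_diff_inverse2)
  define Q P s where "Q = int q" and "P = Q ^ m" and "s = (\<Sum>i<m. Q ^ i)"
  have P_eq: "P = (Q - 1) * s + 1"
    using power_diff_1_eq[of Q m] by (simp add: P_def s_def)
  have powers: "int q ^ (e-1) = Q^2 * P" "int q ^ (e-2) = Q * P" "int q ^ (e-3) = P"
      "(\<Sum>i<e-3. int q ^ i) = s"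
    by (simp_all add: e Q_def P_def s_def power_add power2_eq_square)
  have ell_eq: "ell = s + P + Q * P + Q^2 * P"
  proof -
    have "{..e-1} = {..<m+3}" using e by auto
    then show ?thesis
      using assms(6) by (simp add: Q_def P_def s_def numeral_eq_Suc algebra_simps)
  qed
  have params: "3 \<le> Q" "0 \<le> s" "1 \<le> int h" "int h \<le> Q - 1"
    using assms(2,7,8) by (auto simp: Q_def s_def sum_nonneg)
  have "r = int h * (Q * P + P + s - 1) + 1" "N = 2 * (Q^2 * P) - Q * P - 1"
      "j = 2 * int h * P + int h * s"
    using assms(9-11) ell_eq powers by simp_all
  note normalized = A_window_normalized[OF P_eq params ell_eq this, unfolded Q_def]
  have window_set: "{A q ell r N i | i. 0 \<le> A q ell r N i \<and> A q ell r N i \<le> of_int N}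
      = {A q ell r N i | i. (i = j \<and> 2 \<le> h) \<or> (i = j + 1 \<and> h \<le> q - 2)}"
    using normalized(3) assms(2) by auto
  show ?thesis
    unfolding window_set powers Q_def using normalized(1,2) assms(2,7,8)
    by (intro conjI impI) (auto simp: algebra_simps)
qed

end
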